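(* Let $n\in\mathbb{N}$, let $c=(c_{i,j})$ be an $n\times(n+1)$ matrix with entries in $\{0,1\}$ such that every row and every column contains at least one entry equal to $1$, let $\sigma_1,\ldots,\sigma_n>0$, $\gamma_1,\ldots,\gamma_{n+1}>0$ with $\gamma^\ast=\gamma_1+\cdots+\gamma_{n+1}>1$. Let $\mathbf{X}=(X_1,\ldots,X_n)'$ have decumulative distribution function \[ \mathbf{P}[X_1>x_1,\ldots,X_n>x_n]=\prod_{j=1}^{n+1}\left(1+\sum_{i=1}^n\frac{c_{i,j}}{\sigma_i}x_i\right)^{-\gamma_j},\quad (x_1,\ldots,x_n)'\in(0,\infty)^n, \] and $X_-=\min_{1\le i\le n}X_i$. For $j=1,\ldots,n+1$ put $\alpha_j=\left(\sum_{i=1}^nc_{i,j}/\sigma_i\right)^{-1}$ and $\alpha_+(\boldsymbol{\sigma})=\max_{1\le j\le n+1}\alpha_j$. Let $K$ be a nonnegative integer-valued random variable with $p_k=\mathbf{P}[K=k]=c_+\delta_k$, $k=0,1,\ldots$, where $c_+=\prod_{j=1}^{n+1}(\alpha_j/\alpha_+(\boldsymbol{\sigma}))^{\gamma_j}$, $\delta_0=1$ and $\delta_k=k^{-1}\sum_{l=1}^k\sum_{j=1}^{n+1}\gamma_j(1-\alpha_j/\alpha_+(\boldsymbol{\sigma}))^l\delta_{k-l}$ for $k>0$. Then $X_-\sim Pa(II)(\alpha_+(\boldsymbol{\sigma}),\gamma^\ast+K)$, i.e. \[ \mathbf{P}[X_->x]=\sum_{k=0}^\infty p_k\left(1+\frac{x}{\alpha_+(\boldsymbol{\sigma})}\right)^{-(\gamma^\ast+k)},\quad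 x>0. \]
   Context: $Pa(II)(\sigma,\alpha)$ is the Pareto distribution of the 2nd kind with decumulative distribution function $(1+x/\sigma)^{-\alpha}$, $x>0$; with a random tail index $\gamma^\ast+K$ it denotes the corresponding mixture over the law of $K$. *)

theory Defs
  imports "HOL-Probability.Probability"
begin

text \<open>Indices are 0-based: rows i < n, columns j < n+1.\<close>

definition pa_alpha :: "nat \<Rightarrow> (nat \<Rightarrow> nat \<Rightarrow> real) \<Rightarrow> (nat \<Rightarrow> real) \<Rightarrow> nat \<Rightarrow> real" where
  "pa_alpha n c \<sigma> j = inverse (\<Sum>i<n. c i j / \<sigma> i)"

definition pa_alpha_plus :: "nat \<Rightarrow> (nat \<Rightarrow> nat \<Rightarrow> real) \<Rightarrow> (nat \<Rightarrow> real) \<Rightarrow> real" where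
  "pa_alpha_plus n c \<sigma> = Max (pa_alpha n c \<sigma> ` {..<n+1})"

definition pa_c_plus :: "nat \<Rightarrow> (nat \<Rightarrow> nat \<Rightarrow> real) \<Rightarrow> (nat \<Rightarrow> real) \<Rightarrow> (nat \<Rightarrow> real) \<Rightarrow> real" where
  "pa_c_plus n c \<sigma> \<gamma> =
     (\<Prod>j<n+1. (pa_alpha n c \<sigma> j / pa_alpha_plus n c \<sigma>) powr (\<gamma> j))"

function pa_delta :: "nat \<Rightarrow> (nat \<Rightarrow> nat \<Rightarrow> real) \<Rightarrow> (nat \<Rightarrow> real) \<Rightarrow> (nat \<Rightarrow> real) \<Rightarrow> nat \<Rightarrow> real" where
  "pa_delta n c \<sigma> \<gamma> k =
     (if k = 0 then 1
      else (\<Sum>l=1..k. (\<Sum>j<n+1. \<gamma> j * (1 - pa_alpha n c \<sigma> j / pa_alpha_plus n c \<sigma>) ^ l)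
                        * pa_delta n c \<sigma> \<gamma> (k - l)) / real k)"
  by auto
termination
  by (relation "Wellfounded.measure (\<lambda>(n, c, \<sigma>, \<gamma>, k). k)") auto

definition pa_p :: "nat \<Rightarrow> (nat \<Rightarrow> nat \<Rightarrow> real) \<Rightarrow> (nat \<Rightarrow> real) \<Rightarrow> (nat \<Rightarrow> real) \<Rightarrow> nat \<Rightarrow> real" where
  "pa_p n c \<sigma> \<gamma> k = pa_c_plus n c \<sigma> \<gamma> * pa_delta n c \<sigma> \<gamma> k"

declare pa_delta.simps[simp del]

end

theory Submission imports Defs begin

text \<open>
  The minimum exceeds \<open>x\<close> iff every component does, so
  \<open>P[X_- > x] = \<Prod>_j (1 + x/\<alpha>_j) powr (-\<gamma>_j)\<close>. With \<open>t = 1 + x/\<alpha>_+\<close>, \<open>z = 1/t\<close> and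
  \<open>q_j = 1 - \<alpha>_j/\<alpha>_+ \<in> [0,1)\<close>, each factor splits as
  \<open>(\<alpha>_j/\<alpha>_+) powr \<gamma>_j \<cdot> t powr (-\<gamma>_j) \<cdot> (1 - q_j z) powr (-\<gamma>_j)\<close>, so the survival function is
  \<open>c_+ t powr (-\<gamma>*)\<close> times \<open>P(z) = \<Prod>_j (1 - q_j z) powr (-\<gamma>_j)\<close>, a product of negative
  binomial series. Comparing coefficients in \<open>z P'(z) = P(z) \<Sum>_j \<gamma>_j q_j z / (1 - q_j z)\<close> gives
  \<open>k P_k = \<Sum>_{l=1..k} (\<Sum>_j \<gamma>_j q_j^l) P_{k-l}\<close>, the recursion defining \<open>\<delta>_k\<close>; hence \<open>P_k = \<delta>_k\<close>
  and expanding \<open>P(1/t)\<close> gives the mixture.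
\<close>

unbundle no vec_syntax
notation fps_nth (infixl "$" 75)

section \<open>Negative binomial power series\<close>

lemma fps_prod_nth_0: "(\<Prod>j\<in>A. f j) $ 0 = (\<Prod>j\<in>A. f j $ 0)"
  by (induction A rule: infinite_finite_induct) auto

text \<open>The expansion of \<open>(1 - q X) powr (-g)\<close>.\<close>
definition negbin_fps :: "real \<Rightarrow> real \<Rightarrow> real fps" where
  "negbin_fps g q = Abs_fps (\<lambda>k. pochhammer g k / fact k * q ^ k)"

text \<open>The expansion of \<open>q X / (1 - q X)\<close>.\<close>
definition geometric_tail_fps :: "real \<Rightarrow> real fps" where
  "geometric_tail_fps q = Abs_fps (\<lambda>m. if m = 0 then 0 else q ^ m)"

lemma fps_const_mult_X_mult_nth:
  fixes f :: "real fps"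
  shows "(fps_const q * fps_X * f) $ k = (if k = 0 then 0 else q * f $ (k - 1))"
  by (simp add: mult.assoc)

lemma negbin_fps_deriv:
  "(1 - fps_const q * fps_X) * fps_deriv (negbin_fps g q) = fps_const (g * q) * negbin_fps g q"
proof (rule fps_ext)
  fix k
  have shift: "real (k + 1) * (pochhammer g (k + 1) / fact (k + 1) * q ^ (k + 1))
      = (g + real k) * (pochhammer g k / fact k * q ^ (k + 1))"
    by (simp add: pochhammer_rec' field_simps del: of_nat_Suc)
  have "((1 - fps_const q * fps_X) * fps_deriv (negbin_fps g q)) $ k
      = fps_deriv (negbin_fps g q) $ k - (fps_const q * fps_X * fps_deriv (negbin_fps g q)) $ k"
    by (simp add: algebra_simps)
  also have "\<dots> = real (k + 1) * (pochhammer g (k + 1) / fact (k + 1) * q ^ (k + 1))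
        - q * (real k * (pochhammer g k / fact k * q ^ k))"
    unfolding fps_const_mult_X_mult_nth by (cases k) (auto simp: negbin_fps_def)
  also have "\<dots> = g * q * (pochhammer g k / fact k * q ^ k)"
    unfolding shift by (simp add: field_simps)
  finally show "((1 - fps_const q * fps_X) * fps_deriv (negbin_fps g q)) $ k
      = (fps_const (g * q) * negbin_fps g q) $ k"
    by (simp add: negbin_fps_def)
qed

lemma geometric_tail_fps_eq:
  "(1 - fps_const q * fps_X) * geometric_tail_fps q = fps_const q * fps_X"
proof (rule fps_ext)
  fix k
  have "((1 - fps_const q * fps_X) * geometric_tail_fps q) $ k
      = geometric_tail_fps q $ k - (fps_const q * fps_X * geometric_tail_fps q) $ k"
    by (simp add: algebra_simps)
  also have "\<dots> = (fps_const q * fps_X) $ k"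
    unfolding fps_const_mult_X_mult_nth
    by (cases k) (auto simp: geometric_tail_fps_def fps_X_def power_eq_if)
  finally show "((1 - fps_const q * fps_X) * geometric_tail_fps q) $ k = (fps_const q * fps_X) $ k" .
qed

lemma negbin_fps_log_deriv:
  "fps_X * fps_deriv (negbin_fps g q) = fps_const g * negbin_fps g q * geometric_tail_fps q"
proof -
  let ?D = "1 - fps_const q * fps_X :: real fps"
  have "?D $ 0 \<noteq> 0"
    by simp
  then have "?D \<noteq> 0"
    by auto
  moreover have "?D * (fps_X * fps_deriv (negbin_fps g q))
      = ?D * (fps_const g * negbin_fps g q * geometric_tail_fps q)"
  proof -
    have "?D * (fps_X * fps_deriv (negbin_fps g q)) = fps_X * (fps_const (g * q) * negbin_fps g q)"
      by (simp only: negbin_fps_deriv mult.left_commute)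
    also have "\<dots> = fps_const g * negbin_fps g q * (fps_const q * fps_X)"
      by (simp only: fps_const_mult[symmetric] mult_ac)
    also have "\<dots> = fps_const g * negbin_fps g q * (?D * geometric_tail_fps q)"
      by (simp only: geometric_tail_fps_eq)
    also have "\<dots> = ?D * (fps_const g * negbin_fps g q * geometric_tail_fps q)"
      by (simp only: mult_ac)
    finally show ?thesis .
  qed
  ultimately show ?thesis
    using mult_left_cancel by blast
qed

lemma prod_negbin_fps_log_deriv:
  fixes m :: nat
  shows "fps_X * fps_deriv (\<Prod>j<m. negbin_fps (g j) (q j))
    = (\<Prod>j<m. negbin_fps (g j) (q j)) * (\<Sum>j<m. fps_const (g j) * geometric_tail_fps (q j))"
proof (induction m)
  case (Suc m)
  let ?P = "\<Prod>j<m. negbin_fps (g j) (q j)" and ?G = "negbin_fps (g m) (q m)"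
  have "fps_X * fps_deriv (?P * ?G) = ?G * (fps_X * fps_deriv ?P) + ?P * (fps_X * fps_deriv ?G)"
    by (simp add: distrib_left mult_ac)
  also have "\<dots> = ?P * ?G * ((\<Sum>j<m. fps_const (g j) * geometric_tail_fps (q j))
                              + fps_const (g m) * geometric_tail_fps (q m))"
    by (simp only: Suc.IH negbin_fps_log_deriv distrib_left mult_ac)
  finally show ?case by simp
qed simp

lemma prod_negbin_fps_nth_rec:
  fixes m :: nat
  shows "real k * (\<Prod>j<m. negbin_fps (g j) (q j)) $ k
    = (\<Sum>l=1..k. (\<Sum>j<m. g j * q j ^ l) * (\<Prod>j<m. negbin_fps (g j) (q j)) $ (k - l))"
proof -
  let ?P = "\<Prod>j<m. negbin_fps (g j) (q j)"
    and ?A = "\<Sum>j<m. fps_const (g j) * geometric_tail_fps (q j)"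
  have A_nth: "?A $ l = (if l = 0 then 0 else \<Sum>j<m. g j * q j ^ l)" for l
    by (simp add: fps_sum_nth geometric_tail_fps_def)
  have "real k * ?P $ k = (fps_X * fps_deriv ?P) $ k"
    by (cases k) auto
  also have "fps_X * fps_deriv ?P = ?A * ?P"
    by (simp add: prod_negbin_fps_log_deriv mult.commute)
  also have "(?A * ?P) $ k = (\<Sum>i=0..k. ?A $ i * ?P $ (k - i))"
    by (rule fps_mult_nth)
  also have "\<dots> = (\<Sum>l=1..k. (\<Sum>j<m. g j * q j ^ l) * ?P $ (k - l))"
    by (cases k) (simp_all add: sum.atLeast_Suc_atMost A_nth)
  finally show ?thesis .
qed

lemma negbin_fps_sums:
  assumes "\<bar>q * z\<bar> < 1"
  shows "(\<lambda>k. negbin_fps g q $ k * z ^ k) sums (1 - q * z) powr (- g)"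
proof -
  have "(- g gchoose k) * (- (q * z)) ^ k = negbin_fps g q $ k * z ^ k" for k
  proof -
    have "(- g gchoose k) * (- (q * z)) ^ k
        = ((- 1) ^ k * (- 1) ^ k) * (pochhammer g k / fact k * (q * z) ^ k)"
      by (simp add: gbinomial_pochhammer power_minus[of "q * z"])
    then show ?thesis
      by (simp add: negbin_fps_def power_mult_distrib flip: power_add)
  qed
  then show ?thesis
    using gen_binomial_real[of "- (q * z)" "- g"] assms by simp
qed

lemma prod_negbin_fps_nth_nonneg:
  fixes m :: nat
  assumes "\<forall>j<m. g j > 0 \<and> q j \<ge> 0"
  shows "(\<Prod>j<m. negbin_fps (g j) (q j)) $ k \<ge> 0"
  using assms
proof (induction m arbitrary: k)
  case (Suc m)
  have "negbin_fps (g m) (q m) $ i \<ge> 0" for i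
    using Suc.prems
    by (auto simp: negbin_fps_def intro!: divide_nonneg_pos mult_nonneg_nonneg less_imp_le[OF pochhammer_pos])
  with Suc show ?case
    by (auto simp: fps_mult_nth intro!: sum_nonneg)
qed simp

text \<open>Nonnegative coefficients make both factor series absolutely convergent, so
  Mertens' theorem on Cauchy products applies.\<close>
lemma prod_negbin_fps_sums:
  fixes m :: nat
  assumes "\<forall>j<m. g j > 0 \<and> 0 \<le> q j \<and> q j < 1" "0 \<le> z" "z \<le> 1"
  shows "(\<lambda>k. (\<Prod>j<m. negbin_fps (g j) (q j)) $ k * z ^ k) sums (\<Prod>j<m. (1 - q j * z) powr (- g j))"
  using assms(1)
proof (induction m)
  case 0
  have "(\<lambda>k. (1::real fps) $ k * z ^ k) = (\<lambda>k. if k = 0 then 1 else 0)"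
    by auto
  then show ?case
    using sums_single[of 0 "\<lambda>_. 1::real"] by simp
next
  case (Suc m)
  let ?P = "\<Prod>j<m. negbin_fps (g j) (q j)" and ?G = "negbin_fps (g m) (q m)"
  define a where "a k = ?P $ k * z ^ k" for k
  define b where "b k = ?G $ k * z ^ k" for k
  have "q m * z \<le> q m" "0 \<le> q m * z"
    using Suc.prems assms(2,3) by (auto intro: mult_left_le)
  moreover have "q m < 1"
    using Suc.prems by simp
  ultimately have "\<bar>q m * z\<bar> < 1"
    by simp
  then have sb: "b sums ((1 - q m * z) powr (- g m))"
    unfolding b_def by (rule negbin_fps_sums)
  have sa: "a sums (\<Prod>j<m. (1 - q j * z) powr (- g j))"
    unfolding a_def using Suc by auto
  have "a k \<ge> 0" "b k \<ge> 0" for k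
    unfolding a_def b_def
    using prod_negbin_fps_nth_nonneg[of m g q k] prod_negbin_fps_nth_nonneg[of 1 "\<lambda>_. g m" "\<lambda>_. q m" k]
      Suc.prems assms(2) by auto
  then have "(\<lambda>k. \<Sum>i\<le>k. a i * b (k - i)) sums (suminf a * suminf b)"
    using sums_summable[OF sa] sums_summable[OF sb] by (intro Cauchy_product_sums) auto
  moreover have "(\<Sum>i\<le>k. a i * b (k - i)) = (?P * ?G) $ k * z ^ k" for k
  proof -
    have "(\<Sum>i\<le>k. a i * b (k - i)) = (\<Sum>i=0..k. ?P $ i * ?G $ (k - i) * z ^ k)"
      unfolding a_def b_def atLeast0AtMost[symmetric]
      by (rule sum.cong) (auto simp: power_add[symmetric])
    then show ?thesis
      by (simp add: fps_mult_nth sum_distrib_right)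
  qed
  ultimately show ?case
    using sa sb by (simp add: sums_iff)
qed

lemma pa_alpha_pos:
  assumes "\<forall>i<n. \<forall>j<m. c i j \<in> {0, 1}" and "\<forall>j<m. \<exists>i<n. c i j = 1" and "\<forall>i<n. \<sigma> i > 0"
  shows "\<forall>j<m. pa_alpha n c \<sigma> j > 0"
proof (intro allI impI)
  fix j
  assume j: "j < m"
  then obtain i where "i < n" "c i j = 1"
    using assms(2) by blast
  moreover have "0 \<le> c i' j / \<sigma> i'" if "i' < n" for i'
  proof -
    have "c i' j \<in> {0, 1}"
      using assms(1) j that by blast
    then show ?thesis
      using assms(3) that by auto
  qed
  ultimately have "(\<Sum>i<n. c i j / \<sigma> i) > 0"
    using assms(3) by (intro sum_pos2[of _ i]) auto
  then show "pa_alpha n c \<sigma> j > 0"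
    by (simp add: pa_alpha_def)
qed

lemma pa_alpha_le_plus: "j < n + 1 \<Longrightarrow> pa_alpha n c \<sigma> j \<le> pa_alpha_plus n c \<sigma>"
  unfolding pa_alpha_plus_def by (intro Max_ge) auto

lemma pa_alpha_plus_pos:
  assumes "\<forall>j<n+1. pa_alpha n c \<sigma> j > 0"
  shows "pa_alpha_plus n c \<sigma> > 0"
  using assms[rule_format, of 0] pa_alpha_le_plus[of 0 n c \<sigma>] by simp

section \<open>The coefficients \<open>\<delta>\<^sub>k\<close>\<close>

lemma pa_delta_eq_prod_negbin_fps_nth:
  "pa_delta n c \<sigma> \<gamma> k
    = (\<Prod>j<n+1. negbin_fps (\<gamma> j) (1 - pa_alpha n c \<sigma> j / pa_alpha_plus n c \<sigma>)) $ k"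
proof (induction k rule: less_induct)
  case (less k)
  let ?q = "\<lambda>j. 1 - pa_alpha n c \<sigma> j / pa_alpha_plus n c \<sigma>"
  let ?P = "\<Prod>j<n+1. negbin_fps (\<gamma> j) (?q j)"
  show ?case
  proof (cases "k = 0")
    case True
    then show ?thesis by (simp add: fps_prod_nth_0 negbin_fps_def pa_delta.simps)
  next
    case False
    have "real k * ?P $ k = (\<Sum>l=1..k. (\<Sum>j<n+1. \<gamma> j * ?q j ^ l) * pa_delta n c \<sigma> \<gamma> (k - l))"
      unfolding prod_negbin_fps_nth_rec using False less.IH by (intro sum.cong) auto
    with False show ?thesis
      by (subst pa_delta.simps) (simp add: field_simps)
  qed
qed

lemma pa_delta_sums:
  assumes "\<forall>j<n+1. pa_alpha n c \<sigma> j > 0" "\<forall>j<n+1. \<gamma> j > 0" "0 \<le> z" "z \<le> 1"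
  shows "(\<lambda>k. pa_delta n c \<sigma> \<gamma> k * z ^ k)
    sums (\<Prod>j<n+1. (1 - (1 - pa_alpha n c \<sigma> j / pa_alpha_plus n c \<sigma>) * z) powr (- \<gamma> j))"
proof -
  have "0 < pa_alpha n c \<sigma> j / pa_alpha_plus n c \<sigma>" "pa_alpha n c \<sigma> j / pa_alpha_plus n c \<sigma> \<le> 1"
    if "j < n + 1" for j
    using that assms(1) pa_alpha_plus_pos[OF assms(1)] pa_alpha_le_plus[OF that] by auto
  then show ?thesis
    unfolding pa_delta_eq_prod_negbin_fps_nth using assms(2-4)
    by (intro prod_negbin_fps_sums) auto
qed

section \<open>The survival function of the minimum\<close>

lemma measure_Min_gt_eq_prod:
  fixes X :: "nat \<Rightarrow> 'a \<Rightarrow> real"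
  assumes "n \<noteq> 0" "x > 0"
    and survival: "\<forall>x :: nat \<Rightarrow> real. (\<forall>i<n. x i > 0) \<longrightarrow>
        measure M {\<omega> \<in> space M. \<forall>i<n. X i \<omega> > x i}
          = (\<Prod>j<m. (1 + (\<Sum>i<n. c i j / \<sigma> i * x i)) powr (- \<gamma> j))"
  shows "measure M {\<omega> \<in> space M. Min ((\<lambda>i. X i \<omega>) ` {..<n}) > x}
    = (\<Prod>j<m. (1 + x / pa_alpha n c \<sigma> j) powr (- \<gamma> j))"
proof -
  have "x < Min ((\<lambda>i. X i \<omega>) ` {..<n}) \<longleftrightarrow> (\<forall>i<n. x < X i \<omega>)" for \<omega>
    using assms(1) by (subst Min_gr_iff) auto
  moreover have "(\<Sum>i<n. c i j / \<sigma> i * x) = x / pa_alpha n c \<sigma> j" for j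
    by (simp add: pa_alpha_def sum_distrib_left divide_inverse mult.commute)
  ultimately show ?thesis
    using survival[rule_format, of "\<lambda>_. x"] assms(2) by simp
qed

lemma pareto_factor_split:
  fixes a ap x g :: real
  assumes "0 < a" "0 < ap" "0 \<le> x"
  defines "t \<equiv> 1 + x / ap"
  shows "(1 + x / a) powr (- g) = (a / ap) powr g * t powr (- g) * (1 - (1 - a / ap) * (1 / t)) powr (- g)"
proof -
  have "t > 0"
    using assms(2,3) by (simp add: t_def add_pos_nonneg)
  then have "t * (1 - (1 - a / ap) * (1 / t)) = t - (1 - a / ap)"
    by (simp add: field_simps)
  also have "\<dots> = (a / ap) * (1 + x / a)"
    using assms(1,2) by (simp add: t_def field_simps)
  finally have "t powr (- g) * (1 - (1 - a / ap) * (1 / t)) powr (- g)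
      = (a / ap) powr (- g) * (1 + x / a) powr (- g)"
    by (simp only: powr_mult[symmetric])
  moreover have "(a / ap) powr g * (a / ap) powr (- g) = 1"
    using assms(1,2) by (simp add: powr_add[symmetric])
  ultimately show ?thesis
    by (metis mult.assoc mult_1)
qed

lemma prod_pareto_factor_split:
  fixes a g :: "'b \<Rightarrow> real" and ap x :: real
  assumes "\<forall>j\<in>J. 0 < a j" "0 < ap" "0 \<le> x"
  defines "t \<equiv> 1 + x / ap"
  shows "(\<Prod>j\<in>J. (1 + x / a j) powr (- g j))
    = (\<Prod>j\<in>J. (a j / ap) powr g j) * t powr (- sum g J)
      * (\<Prod>j\<in>J. (1 - (1 - a j / ap) * (1 / t)) powr (- g j))"
proof -
  have "t > 0"
    using assms(2,3) by (simp add: t_def add_pos_nonneg)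
  then have "t powr (- sum g J) = (\<Prod>j\<in>J. t powr (- g j))"
    unfolding sum_negf[symmetric] by (intro powr_sum) simp
  moreover have "(\<Prod>j\<in>J. (1 + x / a j) powr (- g j))
      = (\<Prod>j\<in>J. (a j / ap) powr g j * t powr (- g j) * (1 - (1 - a j / ap) * (1 / t)) powr (- g j))"
    unfolding t_def using assms(1-3) by (intro prod.cong refl pareto_factor_split) auto
  ultimately show ?thesis
    by (simp add: prod.distrib)
qed

lemma powr_minus_add_of_nat:
  fixes t a :: real
  assumes "t > 0"
  shows "t powr (- (a + real k)) = t powr (- a) * (1 / t) ^ k"
proof -
  have "t powr (- real k) = (1 / t) ^ k"
    using assms by (simp add: powr_minus powr_realpow power_one_over inverse_eq_divide)
  then show ?thesis
    by (simp only: minus_add_distrib powr_add)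
qed

theorem theorem2p4:
  fixes M :: "'a measure" and n :: nat
    and c :: "nat \<Rightarrow> nat \<Rightarrow> real" and \<sigma> \<gamma> :: "nat \<Rightarrow> real"
    and X :: "nat \<Rightarrow> 'a \<Rightarrow> real"
  assumes "prob_space M"
    and c01: "\<forall>i<n. \<forall>j<n+1. c i j \<in> {0, 1}"
    and rows: "\<forall>i<n. \<exists>j<n+1. c i j = 1"
    and cols: "\<forall>j<n+1. \<exists>i<n. c i j = 1"
    and \<sigma>_pos: "\<forall>i<n. \<sigma> i > 0"
    and \<gamma>_pos: "\<forall>j<n+1. \<gamma> j > 0"
    and \<gamma>_sum: "(\<Sum>j<n+1. \<gamma> j) > 1"
    and X_rv: "\<forall>i<n. X i \<in> borel_measurable M"
    and survival: "\<forall>x :: nat \<Rightarrow> real. (\<forall>i<n. x i > 0) \<longrightarrow>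
        measure M {\<omega> \<in> space M. \<forall>i<n. X i \<omega> > x i}
          = (\<Prod>j<n+1. (1 + (\<Sum>i<n. c i j / \<sigma> i * x i)) powr (- \<gamma> j))"
  shows "\<forall>x > 0. (\<lambda>k. pa_p n c \<sigma> \<gamma> k *
             (1 + x / pa_alpha_plus n c \<sigma>) powr (- ((\<Sum>j<n+1. \<gamma> j) + real k)))
           sums measure M {\<omega> \<in> space M. Min ((\<lambda>i. X i \<omega>) ` {..<n}) > x}"
proof (intro allI impI)
  fix x :: real
  assume x: "x > 0"
  define t where "t = 1 + x / pa_alpha_plus n c \<sigma>"
  define C where "C = pa_c_plus n c \<sigma> \<gamma> * t powr (- (\<Sum>j<n+1. \<gamma> j))"
  have \<alpha>_pos: "\<forall>j<n+1. pa_alpha n c \<sigma> j > 0"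
    using c01 cols \<sigma>_pos by (rule pa_alpha_pos)
  have t: "t \<ge> 1"
    using x pa_alpha_plus_pos[OF \<alpha>_pos] by (simp add: t_def)
  have "n \<noteq> 0"
    using cols[rule_format, of 0] by auto
  then have "measure M {\<omega> \<in> space M. Min ((\<lambda>i. X i \<omega>) ` {..<n}) > x}
      = (\<Prod>j<n+1. (1 + x / pa_alpha n c \<sigma> j) powr (- \<gamma> j))" (is "?survival = _")
    using x survival by (rule measure_Min_gt_eq_prod)
  also have "\<dots> = C * (\<Prod>j<n+1. (1 - (1 - pa_alpha n c \<sigma> j / pa_alpha_plus n c \<sigma>) * (1 / t)) powr (- \<gamma> j))"
      (is "_ = C * ?P")
    unfolding C_def t_def pa_c_plus_def
    using \<alpha>_pos pa_alpha_plus_pos[OF \<alpha>_pos] x by (intro prod_pareto_factor_split) auto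
  finally have survival_Min: "?survival = C * ?P" .
  have terms: "pa_p n c \<sigma> \<gamma> k * t powr (- ((\<Sum>j<n+1. \<gamma> j) + real k))
      = C * (pa_delta n c \<sigma> \<gamma> k * (1 / t) ^ k)" for k
    using t unfolding pa_p_def C_def
    by (subst powr_minus_add_of_nat) (simp_all add: mult_ac)
  have "(\<lambda>k. C * (pa_delta n c \<sigma> \<gamma> k * (1 / t) ^ k)) sums (C * ?P)"
    using t by (intro sums_mult pa_delta_sums \<alpha>_pos \<gamma>_pos) auto
  then show "(\<lambda>k. pa_p n c \<sigma> \<gamma> k *
      (1 + x / pa_alpha_plus n c \<sigma>) powr (- ((\<Sum>j<n+1. \<gamma> j) + real k))) sums ?survival"
    unfolding t_def[symmetric] terms survival_Min .
qed

end
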